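(* Let $X=(X_1,\dots,X_p)$ be a jointly continuous random vector in $\mathbb{R}^p$, and let $a_1,\dots,a_{\mathcal{R}}\in\mathbb{C}$ be such that the set $\mathcal{S}'=\{|a_k|^2:k\in[\mathcal{R}]\}\cup\{a_k^Ha_\ell+a_ka_\ell^H:1\le k<\ell\le\mathcal{R}\}$ is rationally independent. Let $\mathcal{L}=\mathcal{S}_1\cup\mathcal{S}_2\cup\mathcal{S}_3$ (viewed as a family of reals), where $\mathcal{S}_1=\{X_i^2|a_k|^2:i\in[p],k\in[\mathcal{R}]\}$, $\mathcal{S}_2=\{X_iX_j|a_k|^2:1\le i<j\le p,k\in[\mathcal{R}]\}$, $\mathcal{S}_3=\{X_iX_j(a_k^Ha_\ell+a_ka_\ell^H):1\le i<j\le p,1\le k<\ell\le\mathcal{R}\}$. Then $\mathbb{P}(\mathcal{L}\text{ is rationally independent})=1$, where the probability is over the joint distribution of $X_1,\dots,X_p$.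
   Context: $x^H$ denotes the complex conjugate of $x\in\mathbb{C}$, so $a_k^Ha_\ell+a_ka_\ell^H\in\mathbb{R}$. A random vector in $\mathbb{R}^p$ is jointly continuous if it has a joint density with respect to Lebesgue measure. A finite family of reals $(x_k)$ is rationally independent if $\sum_kq_kx_k=0$ with $q_k\in\mathbb{Q}$ implies all $q_k=0$. *)

theory Defs
  imports "HOL-Probability.Probability"
begin

definition rat_indep :: "'i set \<Rightarrow> ('i \<Rightarrow> real) \<Rightarrow> bool" where
  "rat_indep I x \<longleftrightarrow>
     (\<forall>q. (\<forall>k\<in>I. q k \<in> \<rat>) \<longrightarrow> (\<Sum>k\<in>I. q k * x k) = 0 \<longrightarrow> (\<forall>k\<in>I. q k = 0))"

text \<open>Indices of S' (0-based: k < R, k < l < R).\<close>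
datatype sidx = T1 nat | T2 nat nat

definition Sidx :: "nat \<Rightarrow> sidx set" where
  "Sidx R = {T1 k | k. k < R} \<union> {T2 k l | k l. k < l \<and> l < R}"

fun Sfam :: "(nat \<Rightarrow> complex) \<Rightarrow> sidx \<Rightarrow> real" where
  "Sfam a (T1 k) = (cmod (a k))\<^sup>2"
| "Sfam a (T2 k l) = Re (cnj (a k) * a l + a k * cnj (a l))"

text \<open>Indices of L = S1 \<union> S2 \<union> S3 (0-based), viewed as an indexed family.\<close>
datatype lidx = L1 nat nat | L2 nat nat nat | L3 nat nat nat nat

definition Lidx :: "nat \<Rightarrow> nat \<Rightarrow> lidx set" where
  "Lidx p R = {L1 i k | i k. i < p \<and> k < R}
            \<union> {L2 i j k | i j k. i < j \<and> j < p \<and> k < R}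
            \<union> {L3 i j k l | i j k l. i < j \<and> j < p \<and> k < l \<and> l < R}"

fun Lfam :: "(nat \<Rightarrow> real) \<Rightarrow> (nat \<Rightarrow> complex) \<Rightarrow> lidx \<Rightarrow> real" where
  "Lfam x a (L1 i k) = (x i)\<^sup>2 * (cmod (a k))\<^sup>2"
| "Lfam x a (L2 i j k) = x i * x j * (cmod (a k))\<^sup>2"
| "Lfam x a (L3 i j k l) = x i * x j * Re (cnj (a k) * a l + a k * cnj (a l))"

end

theory Submission
  imports Defs "HOL-Computational_Algebra.Polynomial"
begin

text \<open>
  Every member of L is \<open>X i * X j * s\<close> for a triple \<open>(i, j, s)\<close> with \<open>i \<le> j\<close> and
  \<open>s \<in> S'\<close>, and distinct members have distinct triples. A rational relation among
  the members of L therefore says that the quadratic form \<open>\<Sum>i j. c i j * X i * X j\<close>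
  vanishes, where each \<open>c i j\<close> is a rational combination of S'. If the relation is
  nontrivial, rational independence of S' makes some \<open>c i j\<close> with \<open>i \<le> j\<close> nonzero, so
  the form is a nonzero polynomial and its zero set is Lebesgue-null: by Fubini, almost
  every line parallel to a coordinate axis meets it in at most two points. Since X has a
  density, it almost surely avoids each of these countably many null sets.
\<close>

lemma rat_indep_cong:
  "(\<And>k. k \<in> I \<Longrightarrow> x k = y k) \<Longrightarrow> rat_indep I x \<longleftrightarrow> rat_indep I y"
  unfolding rat_indep_def by (simp cong: sum.cong)

lemma rat_indepD:
  "rat_indep I x \<Longrightarrow> \<forall>k\<in>I. q k \<in> \<rat> \<Longrightarrow> (\<Sum>k\<in>I. q k * x k) = 0 \<Longrightarrow> k \<in> I \<Longrightarrow> q k = 0"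
  unfolding rat_indep_def by blast

lemma rat_indep_iff_PiE:
  "rat_indep I x \<longleftrightarrow>
     (\<forall>q \<in> I \<rightarrow>\<^sub>E \<rat>. (\<Sum>k\<in>I. q k * x k) = 0 \<longrightarrow> (\<forall>k\<in>I. q k = 0))"
proof
  assume "\<forall>q \<in> I \<rightarrow>\<^sub>E \<rat>. (\<Sum>k\<in>I. q k * x k) = 0 \<longrightarrow> (\<forall>k\<in>I. q k = 0)"
  from this[rule_format, of "restrict q I" for q] show "rat_indep I x"
    unfolding rat_indep_def by (auto cong: sum.cong)
qed (auto simp: rat_indep_def)

lemma pred_rat_indep:
  assumes "finite I" and h: "\<And>k. k \<in> I \<Longrightarrow> (\<lambda>x. h x k) \<in> borel_measurable N"
  shows "Measurable.pred N (\<lambda>x. rat_indep I (h x))"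
proof -
  have [measurable]: "(\<lambda>x. \<Sum>k\<in>I. q k * h x k) \<in> borel_measurable N" for q
    using h by (intro borel_measurable_sum borel_measurable_times) auto
  have Q: "countable (I \<rightarrow>\<^sub>E \<rat>)" "I \<rightarrow>\<^sub>E \<rat> \<noteq> {}"
    using \<open>finite I\<close> by (auto intro!: countable_PiE countable_rat simp: PiE_eq_empty_iff)
  have "{x \<in> space N. rat_indep I (h x)} =
      (\<Inter>q \<in> I \<rightarrow>\<^sub>E \<rat>. {x \<in> space N. (\<Sum>k\<in>I. q k * h x k) = 0 \<longrightarrow> (\<forall>k\<in>I. q k = 0)})"
    using Q(2) by (auto simp: rat_indep_iff_PiE)
  also have "\<dots> \<in> sets N"
    using Q by (intro sets.countable_INT') auto
  finally show ?thesis
    unfolding pred_def .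
qed

lemma (in prob_space) prob_rat_indep_eq_1:
  fixes h :: "'b \<Rightarrow> 'i \<Rightarrow> real"
  assumes Y: "distributed M N Y f" and "finite I"
    and h: "\<And>k. k \<in> I \<Longrightarrow> (\<lambda>x. h x k) \<in> borel_measurable N"
    and null: "\<And>q. \<forall>k\<in>I. q k \<in> \<rat> \<Longrightarrow> \<exists>k\<in>I. q k \<noteq> 0 \<Longrightarrow>
                 {x \<in> space N. (\<Sum>k\<in>I. q k * h x k) = 0} \<in> null_sets N"
  shows "prob {\<omega> \<in> space M. rat_indep I (h (Y \<omega>))} = 1"
proof -
  have [measurable]: "Measurable.pred N (\<lambda>x. rat_indep I (h x))"
    using \<open>finite I\<close> h by (rule pred_rat_indep)
  have [measurable]: "Y \<in> measurable M N"
    using Y by (rule distributed_measurable)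
  have "AE x in N. \<forall>q \<in> I \<rightarrow>\<^sub>E \<rat>. (\<Sum>k\<in>I. q k * h x k) = 0 \<longrightarrow> (\<forall>k\<in>I. q k = 0)"
  proof (rule AE_ball_countable')
    fix q :: "'i \<Rightarrow> real" assume "q \<in> I \<rightarrow>\<^sub>E \<rat>"
    show "AE x in N. (\<Sum>k\<in>I. q k * h x k) = 0 \<longrightarrow> (\<forall>k\<in>I. q k = 0)"
    proof (cases "\<forall>k\<in>I. q k = 0")
      case False
      with \<open>q \<in> I \<rightarrow>\<^sub>E \<rat>\<close> have "{x \<in> space N. (\<Sum>k\<in>I. q k * h x k) = 0} \<in> null_sets N"
        by (intro null) auto
      then show ?thesis
        by (rule AE_I') auto
    qed simp
  qed (use \<open>finite I\<close> in \<open>auto intro!: countable_PiE countable_rat\<close>)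
  then have "AE x in N. rat_indep I (h x)"
    by (simp add: rat_indep_iff_PiE)
  then have "AE \<omega> in M. rat_indep I (h (Y \<omega>))"
    by (subst distributed_AE2[OF Y]) (auto elim!: AE_mp)
  then show ?thesis
    by (subst prob_Collect_eq_1) measurable
qed

lemma null_sets_PiM_if_finite_sections:
  fixes A :: "('i \<Rightarrow> real) set"
  assumes "finite I" "i \<in> I" and A: "A \<in> sets (PiM I (\<lambda>_. lborel))"
    and sections: "AE y in PiM (I - {i}) (\<lambda>_. lborel). finite {t. y(i := t) \<in> A}"
  shows "A \<in> null_sets (PiM I (\<lambda>_. lborel))"
proof -
  interpret product_sigma_finite "\<lambda>_::'i. lborel :: real measure" by standard
  have I: "I = insert i (I - {i})"
    using \<open>i \<in> I\<close> by auto
  have "emeasure (PiM I (\<lambda>_. lborel)) A = (\<integral>\<^sup>+ x. indicator A x \<partial>PiM I (\<lambda>_. lborel))"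
    using A by simp
  also have "\<dots> = (\<integral>\<^sup>+ y. (\<integral>\<^sup>+ t. indicator A (y(i := t)) \<partial>lborel) \<partial>PiM (I - {i}) (\<lambda>_. lborel))"
    using product_nn_integral_insert[of "I - {i}" i "indicator A"] \<open>finite I\<close> A I by simp
  also have "\<dots> = (\<integral>\<^sup>+ y. 0 \<partial>PiM (I - {i}) (\<lambda>_. lborel :: real measure))"
  proof (rule nn_integral_cong_AE)
    from sections show "AE y in PiM (I - {i}) (\<lambda>_. lborel).
        (\<integral>\<^sup>+ t. indicator A (y(i := t)) \<partial>lborel) = 0"
    proof eventually_elim
      case (elim y)
      then have "AE t in lborel. t \<notin> {t. y(i := t) \<in> A}"
        by (intro AE_not_in finite_imp_null_set_lborel)
      then have "(\<integral>\<^sup>+ t. indicator A (y(i := t)) \<partial>lborel) =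
          (\<integral>\<^sup>+ t. 0 \<partial>(lborel :: real measure))"
        by (intro nn_integral_cong_AE) (auto elim!: AE_mp)
      then show ?case
        by simp
    qed
  qed
  finally show ?thesis
    using A by (auto intro!: null_setsI)
qed

lemma linear_form_upd:
  fixes b :: "'i \<Rightarrow> real"
  assumes "finite I" "i \<in> I"
  shows "(\<Sum>l\<in>I. b l * (y(i := t)) l) = poly [:\<Sum>l\<in>I - {i}. b l * y l, b i:] t"
  using assms by (simp add: sum.remove algebra_simps)

lemma quadratic_form_insert:
  fixes c :: "'i \<Rightarrow> 'i \<Rightarrow> real"
  assumes "finite J" "i \<notin> J"
  shows "(\<Sum>k\<in>insert i J. \<Sum>l\<in>insert i J. c k l * x k * x l) =
    c i i * (x i)\<^sup>2 + x i * (\<Sum>l\<in>J. (c i l + c l i) * x l) + (\<Sum>k\<in>J. \<Sum>l\<in>J. c k l * x k * x l)"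
  using assms by (simp add: sum.distrib sum_distrib_left algebra_simps power2_eq_square)

lemma quadratic_form_upd:
  fixes c :: "'i \<Rightarrow> 'i \<Rightarrow> real"
  assumes "finite I" "i \<in> I"
  shows "(\<Sum>k\<in>I. \<Sum>l\<in>I. c k l * (y(i := t)) k * (y(i := t)) l) =
    poly [:\<Sum>k\<in>I - {i}. \<Sum>l\<in>I - {i}. c k l * y k * y l,
           \<Sum>l\<in>I - {i}. (c i l + c l i) * y l, c i i:] t"
proof -
  have "I = insert i (I - {i})"
    using assms(2) by blast
  then have "(\<Sum>k\<in>I. \<Sum>l\<in>I. c k l * (y(i := t)) k * (y(i := t)) l) = c i i * t\<^sup>2
      + t * (\<Sum>l\<in>I - {i}. (c i l + c l i) * (y(i := t)) l)
      + (\<Sum>k\<in>I - {i}. \<Sum>l\<in>I - {i}. c k l * (y(i := t)) k * (y(i := t)) l)"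
    using quadratic_form_insert[of "I - {i}" i c "y(i := t)"] assms(1) by simp
  then show ?thesis
    by (simp add: algebra_simps power2_eq_square)
qed

lemma linear_form_zero_null:
  fixes b :: "'i \<Rightarrow> real"
  assumes "finite I" "j \<in> I" "b j \<noteq> 0"
  shows "{x \<in> space (PiM I (\<lambda>_. lborel)). (\<Sum>l\<in>I. b l * x l) = 0}
           \<in> null_sets (PiM I (\<lambda>_. lborel))"
proof (rule null_sets_PiM_if_finite_sections[OF assms(1,2)])
  show "AE y in PiM (I - {j}) (\<lambda>_. lborel).
          finite {t. y(j := t) \<in> {x \<in> space (PiM I (\<lambda>_. lborel)). (\<Sum>l\<in>I. b l * x l) = 0}}"
  proof (intro AE_I2 finite_subset[OF _ poly_roots_finite])
    fix y
    show "{t. y(j := t) \<in> {x \<in> space (PiM I (\<lambda>_. lborel)). (\<Sum>l\<in>I. b l * x l) = 0}}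
        \<subseteq> {t. poly [:\<Sum>l\<in>I - {j}. b l * y l, b j:] t = 0}"
      by (auto simp: linear_form_upd[OF assms(1,2)] simp del: fun_upd_apply)
  qed (use assms(3) in simp)
qed measurable

lemma quadratic_form_zero_null:
  fixes c :: "'i \<Rightarrow> 'i \<Rightarrow> real"
  assumes "finite I" and nonzero: "\<exists>i\<in>I. c i i \<noteq> 0 \<or> (\<exists>j\<in>I. j \<noteq> i \<and> c i j + c j i \<noteq> 0)"
  shows "{x \<in> space (PiM I (\<lambda>_. lborel)). (\<Sum>k\<in>I. \<Sum>l\<in>I. c k l * x k * x l) = 0}
           \<in> null_sets (PiM I (\<lambda>_. lborel))" (is "?Z \<in> _")
proof -
  from nonzero obtain i where i: "i \<in> I"
    and ci: "c i i \<noteq> 0 \<or> (\<exists>j\<in>I. j \<noteq> i \<and> c i j + c j i \<noteq> 0)"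
    by blast
  define B where "B y = (\<Sum>l\<in>I - {i}. (c i l + c l i) * y l)" for y :: "'i \<Rightarrow> real"
  define C where "C y = (\<Sum>k\<in>I - {i}. \<Sum>l\<in>I - {i}. c k l * y k * y l)" for y :: "'i \<Rightarrow> real"
  have "AE y in PiM (I - {i}) (\<lambda>_. lborel). c i i \<noteq> 0 \<or> B y \<noteq> 0"
  proof (cases "c i i = 0")
    case True
    with ci obtain j where "j \<in> I - {i}" "c i j + c j i \<noteq> 0"
      by auto
    then have "{y \<in> space (PiM (I - {i}) (\<lambda>_. lborel)). B y = 0}
        \<in> null_sets (PiM (I - {i}) (\<lambda>_. lborel))"
      unfolding B_def using \<open>finite I\<close> by (intro linear_form_zero_null) auto
    then show ?thesis
      by (rule AE_I') auto
  qed simp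
  then have "AE y in PiM (I - {i}) (\<lambda>_. lborel). finite {t. y(i := t) \<in> ?Z}"
  proof eventually_elim
    case (elim y)
    then have "finite {t. poly [:C y, B y, c i i:] t = 0}"
      by (intro poly_roots_finite) auto
    then show ?case
      by (rule finite_subset[rotated])
        (auto simp: quadratic_form_upd[OF \<open>finite I\<close> i] B_def C_def simp del: fun_upd_apply)
  qed
  then show ?thesis
    by (rule null_sets_PiM_if_finite_sections[OF \<open>finite I\<close> i, rotated]) measurable
qed

lemma finite_Sidx: "finite (Sidx R)"
proof (rule finite_subset)
  show "Sidx R \<subseteq> T1 ` {..<R} \<union> case_prod T2 ` ({..<R} \<times> {..<R})"
    by (auto simp: Sidx_def)
qed auto

fun Lfactors :: "lidx \<Rightarrow> nat \<times> nat \<times> sidx" where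
  "Lfactors (L1 i k) = (i, i, T1 k)"
| "Lfactors (L2 i j k) = (i, j, T1 k)"
| "Lfactors (L3 i j k l) = (i, j, T2 k l)"

lemma Lfam_eq_Lfactors: "Lfactors L = (i, j, s) \<Longrightarrow> Lfam x a L = x i * x j * Sfam a s"
  by (cases L) (auto simp: power2_eq_square)

lemma inj_on_Lfactors: "inj_on Lfactors (Lidx p R)"
  by (auto simp: inj_on_def Lidx_def)

lemma Lfactors_Lidx: "Lfactors ` Lidx p R \<subseteq> {(i, j, s). i \<le> j \<and> j < p \<and> s \<in> Sidx R}"
  by (auto simp: Lidx_def Sidx_def)

lemma finite_Lidx: "finite (Lidx p R)"
proof (rule finite_imageD[OF _ inj_on_Lfactors])
  have "Lfactors ` Lidx p R \<subseteq> {..<p} \<times> {..<p} \<times> Sidx R"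
    using Lfactors_Lidx by fastforce
  then show "finite (Lfactors ` Lidx p R)"
    by (rule finite_subset) (simp add: finite_Sidx)
qed

definition relation_coeff ::
    "(lidx \<Rightarrow> real) \<Rightarrow> (nat \<Rightarrow> complex) \<Rightarrow> nat \<Rightarrow> nat \<Rightarrow> nat \<Rightarrow> nat \<Rightarrow> real" where
  "relation_coeff q a p R i j =
    (\<Sum>s\<in>Sidx R. sum q {L \<in> Lidx p R. Lfactors L = (i, j, s)} * Sfam a s)"

lemma Lfam_relation_eq_quadratic_form:
  "(\<Sum>L\<in>Lidx p R. q L * Lfam x a L) = (\<Sum>i<p. \<Sum>j<p. relation_coeff q a p R i j * x i * x j)"
proof -
  let ?T = "{..<p} \<times> {..<p} \<times> Sidx R"
  have "Lfactors ` Lidx p R \<subseteq> ?T"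
    using Lfactors_Lidx[of p R] by fastforce
  then have "(\<Sum>L\<in>Lidx p R. q L * Lfam x a L) =
      (\<Sum>t\<in>?T. \<Sum>L\<in>{L \<in> Lidx p R. Lfactors L = t}. q L * Lfam x a L)"
    by (intro sum.group[symmetric] finite_Lidx) (auto simp: finite_Sidx)
  also have "\<dots> = (\<Sum>(i, j, s)\<in>?T.
      sum q {L \<in> Lidx p R. Lfactors L = (i, j, s)} * (x i * x j * Sfam a s))"
    by (intro sum.cong refl) (auto simp: sum_distrib_right Lfam_eq_Lfactors)
  also have "\<dots> = (\<Sum>i<p. \<Sum>j<p. \<Sum>s\<in>Sidx R.
      sum q {L \<in> Lidx p R. Lfactors L = (i, j, s)} * (x i * x j * Sfam a s))"
    by (simp add: sum.cartesian_product)
  also have "\<dots> = (\<Sum>i<p. \<Sum>j<p. relation_coeff q a p R i j * x i * x j)"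
    by (simp add: relation_coeff_def sum_distrib_left sum_distrib_right mult_ac)
  finally show ?thesis .
qed

lemma relation_coeff_nonzero:
  assumes indep: "rat_indep (Sidx R) (Sfam a)" and q: "\<forall>L\<in>Lidx p R. q L \<in> \<rat>"
    and L: "L \<in> Lidx p R" "q L \<noteq> 0"
  shows "\<exists>i\<in>{..<p}. relation_coeff q a p R i i \<noteq> 0 \<or>
           (\<exists>j\<in>{..<p}. j \<noteq> i \<and> relation_coeff q a p R i j + relation_coeff q a p R j i \<noteq> 0)"
proof -
  obtain i j s where ijs: "Lfactors L = (i, j, s)"
    by (cases "Lfactors L") blast
  have "Lfactors L \<in> Lfactors ` Lidx p R"
    using L(1) by (rule imageI)
  then have "i \<le> j" "j < p" "s \<in> Sidx R"
    using Lfactors_Lidx ijs by auto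
  have fiber: "{L' \<in> Lidx p R. Lfactors L' = (i, j, s)} = {L}"
  proof (intro set_eqI iffI)
    fix L' assume "L' \<in> {L' \<in> Lidx p R. Lfactors L' = (i, j, s)}"
    then show "L' \<in> {L}"
      using inj_onD[OF inj_on_Lfactors _ _ L(1)] ijs by auto
  qed (use L(1) ijs in simp)
  define c where "c s' = sum q {L' \<in> Lidx p R. Lfactors L' = (i, j, s')}" for s'
  have coeff_ij: "relation_coeff q a p R i j \<noteq> 0"
  proof
    assume "relation_coeff q a p R i j = 0"
    then have "(\<Sum>s'\<in>Sidx R. c s' * Sfam a s') = 0"
      by (simp add: relation_coeff_def c_def)
    moreover have "\<forall>s'\<in>Sidx R. c s' \<in> \<rat>"
      using q by (auto simp: c_def)
    ultimately have "c s = 0"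
      using rat_indepD[OF indep] \<open>s \<in> Sidx R\<close> by blast
    with fiber L(2) show False
      by (simp add: c_def)
  qed
  have coeff_ji: "relation_coeff q a p R j i = 0" if "i \<noteq> j"
  proof -
    have "Lfactors L' \<noteq> (j, i, s')" if "L' \<in> Lidx p R" for L' s'
      using Lfactors_Lidx[of p R] imageI[OF that, of Lfactors] \<open>i \<le> j\<close> \<open>i \<noteq> j\<close> by auto
    then have empty: "{L' \<in> Lidx p R. Lfactors L' = (j, i, s')} = {}" for s'
      by blast
    show ?thesis
      unfolding relation_coeff_def empty by simp
  qed
  show ?thesis
  proof (cases "i = j")
    case True
    with coeff_ij \<open>j < p\<close> show ?thesis
      by auto
  next
    case False
    with coeff_ij coeff_ji \<open>i \<le> j\<close> \<open>j < p\<close> show ?thesis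
      by (intro bexI[of _ i]) auto
  qed
qed

lemma Lfam_relation_null:
  assumes "rat_indep (Sidx R) (Sfam a)" "\<forall>L\<in>Lidx p R. q L \<in> \<rat>" "\<exists>L\<in>Lidx p R. q L \<noteq> 0"
  shows "{x \<in> space (PiM {..<p} (\<lambda>_. lborel)). (\<Sum>L\<in>Lidx p R. q L * Lfam x a L) = 0}
           \<in> null_sets (PiM {..<p} (\<lambda>_. lborel))"
  using quadratic_form_zero_null[of "{..<p}" "relation_coeff q a p R"]
    relation_coeff_nonzero[OF assms(1,2)] assms(3)
  by (auto simp: Lfam_relation_eq_quadratic_form)

theorem lemma6:
  fixes M :: "'a measure" and X :: "nat \<Rightarrow> 'a \<Rightarrow> real"
    and f :: "(nat \<Rightarrow> real) \<Rightarrow> ennreal"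
    and a :: "nat \<Rightarrow> complex" and p R :: nat
  assumes "prob_space M"
    and "distributed M (PiM {..<p} (\<lambda>_. lborel)) (\<lambda>\<omega>. \<lambda>i\<in>{..<p}. X i \<omega>) f"
    and "rat_indep (Sidx R) (Sfam a)"
  shows "measure M {\<omega> \<in> space M. rat_indep (Lidx p R) (Lfam (\<lambda>i. X i \<omega>) a)} = 1"
proof -
  interpret prob_space M by fact
  let ?Y = "\<lambda>\<omega>. \<lambda>i\<in>{..<p}. X i \<omega>"
  have "Lfam (\<lambda>i. X i \<omega>) a L = Lfam (?Y \<omega>) a L" if "L \<in> Lidx p R" for L \<omega>
    using that by (cases L) (auto simp: Lidx_def)
  then have "rat_indep (Lidx p R) (Lfam (\<lambda>i. X i \<omega>) a) \<longleftrightarrow>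
      rat_indep (Lidx p R) (Lfam (?Y \<omega>) a)" for \<omega>
    by (rule rat_indep_cong)
  moreover have "prob {\<omega> \<in> space M. rat_indep (Lidx p R) (Lfam (?Y \<omega>) a)} = 1"
  proof (rule prob_rat_indep_eq_1[OF assms(2) finite_Lidx])
    show "(\<lambda>x. Lfam x a L) \<in> borel_measurable (PiM {..<p} (\<lambda>_. lborel))" if "L \<in> Lidx p R" for L
      using that by (cases L) (auto simp: Lidx_def)
  qed (rule Lfam_relation_null[OF assms(3)])
  ultimately show ?thesis
    by simp
qed

end
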